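(* For every $n$ there is an OBDD $D_n$ on $O(n)$ variables of weak width at most $3$ and a subset $Z$ of its variables such that the function $\neg\exists Z\,D_n$ has no OBDD of size $2^{o(n)}$.
   Context: A binary decision diagram (BDD) is a directed acyclic graph with one source and two sinks labeled $0$ and $1$; every non-sink node is labeled by a Boolean variable and has two outgoing edges labeled $0$ and $1$. On an assignment one follows, from the source, at each node labeled $X$ the edge labeled by the value of $X$; the label of the reached sink is the output. An OBDD is a BDD in which on every source–sink path the variables appear at most once and in a fixed order. The weak width of an OBDD (not necessarily complete) is the maximum, over variables $x$, of the number of nodes labeled by $x$. $\exists Z\,D$ is the function on the remaining variables true iff some extension to $Z$ satisfies $D$. *)

theory Defs
  imports Complex_Main "HOL-Library.Landau_Symbols"
begin

text \<open>A BDD: inner nodes are natural numbers (a finite set), sinks are Inr False / Inr True.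
  Each inner node v carries a variable label bvar v and successors bsucc v False / bsucc v True.\<close>

record bdd =
  bnodes :: "nat set"
  bsrc :: "nat + bool"
  bvar :: "nat \<Rightarrow> nat"
  bsucc :: "nat \<Rightarrow> bool \<Rightarrow> nat + bool"

definition valid_target :: "bdd \<Rightarrow> nat + bool \<Rightarrow> bool" where
  "valid_target D u \<longleftrightarrow> (case u of Inl v \<Rightarrow> v \<in> bnodes D | Inr b \<Rightarrow> True)"

text \<open>An OBDD: finite, edges stay inside the diagram, and there is a fixed variable order
  (injective rank rho) which strictly increases along every edge between inner nodes; hence
  the graph is acyclic and on every path variables occur at most once and in the fixed order.\<close>

definition is_obdd :: "bdd \<Rightarrow> bool" where
  "is_obdd D \<longleftrightarrow> finite (bnodes D) \<and> valid_target D (bsrc D) \<and>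
     (\<forall>v\<in>bnodes D. \<forall>c. valid_target D (bsucc D v c)) \<and>
     (\<exists>rho :: nat \<Rightarrow> nat. inj rho \<and>
        (\<forall>v\<in>bnodes D. \<forall>c w. bsucc D v c = Inl w \<longrightarrow> rho (bvar D v) < rho (bvar D w)))"

inductive reaches :: "bdd \<Rightarrow> (nat \<Rightarrow> bool) \<Rightarrow> nat + bool \<Rightarrow> bool \<Rightarrow> bool" where
  sink: "reaches D a (Inr b) b"
| step: "v \<in> bnodes D \<Longrightarrow> reaches D a (bsucc D v (a (bvar D v))) b \<Longrightarrow> reaches D a (Inl v) b"

definition computes :: "bdd \<Rightarrow> ((nat \<Rightarrow> bool) \<Rightarrow> bool) \<Rightarrow> bool" where
  "computes D f \<longleftrightarrow> (\<forall>a. reaches D a (bsrc D) (f a))"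

definition bdd_vars :: "bdd \<Rightarrow> nat set" where
  "bdd_vars D = bvar D ` bnodes D"

text \<open>Size: number of nodes, including the two sinks.\<close>
definition bdd_size :: "bdd \<Rightarrow> nat" where
  "bdd_size D = card (bnodes D) + 2"

definition weak_width :: "bdd \<Rightarrow> nat" where
  "weak_width D = Max ({card {v \<in> bnodes D. bvar D v = x} | x. x \<in> bdd_vars D} \<union> {0})"

definition exists_quant :: "nat set \<Rightarrow> bdd \<Rightarrow> (nat \<Rightarrow> bool) \<Rightarrow> bool" where
  "exists_quant Z D a \<longleftrightarrow> (\<exists>a'. (\<forall>x. x \<notin> Z \<longrightarrow> a' x = a x) \<and> reaches D a' (bsrc D) True)"

end

theory Submission
  imports Defs "HOL-Library.FuncSet"
begin

text \<open>The diagram reads the quantified variables to select a left vertex \<open>k\<close> and one of its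
  eight edges in a bipartite expander on \<open>8 m + 8 m\<close> vertices, and accepts iff both endpoints
  of the selected edge are set to \<open>0\<close>. So \<open>\<not> \<exists>Z D\<close> says that the true variables form a vertex
  cover of the expander. In any variable order, cut the vertex variables in half; by expansion
  some side has an induced matching of size \<open>m / 17\<close> across the cut, and the \<open>2^(m/17)\<close> ways
  of switching off left endpoints of the matching must leave the cut through distinct nodes.\<close>

section \<open>Cuts through ordered BDDs\<close>

lemma reaches_unique: "reaches D a u b \<Longrightarrow> reaches D a u b' \<Longrightarrow> b = b'"
proof (induction arbitrary: b' rule: reaches.induct)
  case sink
  then show ?case by (auto elim: reaches.cases)
next
  case step
  from step.prems show ?case by (cases rule: reaches.cases) (use step in auto)
qed

definition var_order :: "bdd \<Rightarrow> (nat \<Rightarrow> nat) \<Rightarrow> bool" where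
  "var_order D rho \<longleftrightarrow> (\<forall>v\<in>bnodes D. \<forall>c w. bsucc D v c = Inl w \<longrightarrow> rho (bvar D v) < rho (bvar D w))"

lemma is_obddE:
  assumes "is_obdd D"
  obtains rho where "inj rho" "var_order D rho" "finite (bnodes D)"
  using assms unfolding is_obdd_def var_order_def by blast

lemma reaches_cong_from:
  assumes "reaches D a u b" "var_order D rho"
    and "\<And>w x. u = Inl w \<Longrightarrow> rho (bvar D w) \<le> rho x \<Longrightarrow> a x = a' x"
  shows "reaches D a' u b"
  using assms
proof (induction rule: reaches.induct)
  case (sink D a b)
  then show ?case by (auto intro: reaches.intros)
next
  case (step v D a b)
  have "reaches D a' (bsucc D v (a (bvar D v))) b"
  proof (rule step.IH[OF step.prems(1)])
    fix w x assume w: "bsucc D v (a (bvar D v)) = Inl w" and "rho (bvar D w) \<le> rho x"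
    moreover have "rho (bvar D v) < rho (bvar D w)"
      using step.prems(1) step.hyps(1) w unfolding var_order_def by blast
    ultimately show "a x = a' x" using step.prems(2) by auto
  qed
  moreover have "a (bvar D v) = a' (bvar D v)" using step.prems(2) by auto
  ultimately show ?case using step.hyps(1) by (auto intro: reaches.intros)
qed

lemma weak_width_le_1:
  assumes "inj_on (bvar D) (bnodes D)" shows "weak_width D \<le> 1"
proof -
  have "card {v \<in> bnodes D. bvar D v = x} \<le> 1" for x
    using assms by (cases "finite {v \<in> bnodes D. bvar D v = x}")
      (auto simp: card_le_Suc0_iff_eq inj_on_def)
  then have "{card {v \<in> bnodes D. bvar D v = x} | x. x \<in> bdd_vars D} \<union> {0} \<subseteq> {..1}"
    by auto
  then show ?thesis
    unfolding weak_width_def by (intro Max.boundedI) (auto dest: finite_subset)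
qed

inductive run_to_cut :: "bdd \<Rightarrow> nat set \<Rightarrow> (nat \<Rightarrow> bool) \<Rightarrow> nat + bool \<Rightarrow> nat + bool \<Rightarrow> bool"
  for D R a where
  sink: "run_to_cut D R a (Inr b) (Inr b)"
| cut: "v \<in> bnodes D \<Longrightarrow> bvar D v \<in> R \<Longrightarrow> run_to_cut D R a (Inl v) (Inl v)"
| step: "v \<in> bnodes D \<Longrightarrow> bvar D v \<notin> R \<Longrightarrow> run_to_cut D R a (bsucc D v (a (bvar D v))) u
          \<Longrightarrow> run_to_cut D R a (Inl v) u"

lemma reaches_run_to_cut: "reaches D a u b \<Longrightarrow> \<exists>u'. run_to_cut D R a u u' \<and> reaches D a u' b"
  by (induction rule: reaches.induct) (auto intro: run_to_cut.intros reaches.intros)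

lemma run_to_cut_unique:
  "run_to_cut D R a u u1 \<Longrightarrow> (\<And>x. x \<notin> R \<Longrightarrow> a x = a' x) \<Longrightarrow> run_to_cut D R a' u u2 \<Longrightarrow> u1 = u2"
proof (induction arbitrary: u2 rule: run_to_cut.induct)
  case step
  from step.prems(2) show ?case
    by (cases rule: run_to_cut.cases) (use step in auto)
qed (auto elim: run_to_cut.cases)

lemma run_to_cut_target:
  "run_to_cut D R a u u' \<Longrightarrow> u' \<in> range Inr \<or> (\<exists>w. u' = Inl w \<and> w \<in> bnodes D \<and> bvar D w \<in> R)"
  by (induction rule: run_to_cut.induct) auto

lemma card_targets: "finite B \<Longrightarrow> card (Inl ` B \<union> range Inr :: (nat + bool) set) = card B + 2"
  by (subst card_Un_disjoint) (auto simp: card_image UNIV_bool)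

text \<open>A fooling-set argument: left assignments that some completion on \<open>R\<close> separates must
  leave the cut before \<open>R\<close> through different nodes, since no later node reads a variable of \<open>L\<close>.\<close>

lemma obdd_fooling_set:
  fixes \<alpha> :: "'i \<Rightarrow> nat \<Rightarrow> bool"
  assumes fin: "finite (bnodes E)" and ord: "var_order E rho" and comp: "computes E F"
    and before: "\<forall>x\<in>L. \<forall>y\<in>R. rho x < rho y"
    and agree: "\<And>S T x. S \<in> I \<Longrightarrow> T \<in> I \<Longrightarrow> x \<notin> L \<Longrightarrow> \<alpha> S x = \<alpha> T x"
    and separated: "\<And>S T. S \<in> I \<Longrightarrow> T \<in> I \<Longrightarrow> S \<noteq> T \<Longrightarrow>
       \<exists>\<beta>. F (override_on (\<alpha> S) \<beta> R) \<noteq> F (override_on (\<alpha> T) \<beta> R)"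
  shows "card I \<le> card (bnodes E) + 2"
proof -
  have reach: "reaches E a (bsrc E) (F a)" for a
    using comp unfolding computes_def by blast
  define exit where "exit S = (SOME u. run_to_cut E R (\<alpha> S) (bsrc E) u)" for S
  have exit: "run_to_cut E R (override_on (\<alpha> S) \<beta> R) (bsrc E) (exit S)" for S \<beta>
  proof -
    obtain u where u: "run_to_cut E R (override_on (\<alpha> S) \<beta> R) (bsrc E) u"
      using reaches_run_to_cut[OF reach] by blast
    have "run_to_cut E R (\<alpha> S) (bsrc E) (exit S)"
      unfolding exit_def by (rule someI_ex) (use reaches_run_to_cut[OF reach] in blast)
    then have "exit S = u" by (rule run_to_cut_unique) (use u in \<open>auto simp: override_on_def\<close>)
    then show ?thesis using u by simp
  qed
  have reach_exit: "reaches E (override_on (\<alpha> S) \<beta> R) (exit S) (F (override_on (\<alpha> S) \<beta> R))" for S \<beta>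
    using reaches_run_to_cut[OF reach] run_to_cut_unique[OF exit] by metis
  have "inj_on exit I"
  proof (rule inj_onI, rule ccontr)
    fix S T assume S: "S \<in> I" and T: "T \<in> I" and eq: "exit S = exit T" and "S \<noteq> T"
    then obtain \<beta> where sep: "F (override_on (\<alpha> S) \<beta> R) \<noteq> F (override_on (\<alpha> T) \<beta> R)"
      using separated by blast
    have "reaches E (override_on (\<alpha> T) \<beta> R) (exit S) (F (override_on (\<alpha> S) \<beta> R))"
    proof (rule reaches_cong_from[OF reach_exit ord])
      fix w x assume w: "exit S = Inl w" and le: "rho (bvar E w) \<le> rho x"
      have "bvar E w \<in> R" using run_to_cut_target[OF exit, of S] w by auto
      then have "x \<notin> L" using before le by (meson not_le)
      then show "override_on (\<alpha> S) \<beta> R x = override_on (\<alpha> T) \<beta> R x"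
        using agree[OF S T] by (simp add: override_on_def)
    qed
    then show False using reach_exit[of T \<beta>] sep eq reaches_unique by metis
  qed
  moreover have "exit ` I \<subseteq> Inl ` bnodes E \<union> range Inr"
    using run_to_cut_target[OF exit] by blast
  ultimately have "card I \<le> card (Inl ` bnodes E \<union> range Inr :: (nat + bool) set)"
    using fin by (metis card_image card_mono finite_Un finite_imageI finite)
  then show ?thesis using card_targets[OF fin] by simp
qed

lemma exists_initial_segment:
  fixes rho :: "'a \<Rightarrow> nat"
  assumes "inj_on rho X" "finite X" "k \<le> card X"
  shows "\<exists>L\<subseteq>X. card L = k \<and> (\<forall>x\<in>L. \<forall>y\<in>X - L. rho x < rho y)"
  using assms(3)
proof (induction k)
  case (Suc k)
  then obtain L where L: "L \<subseteq> X" "card L = k" "\<forall>x\<in>L. \<forall>y\<in>X - L. rho x < rho y" by auto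
  have fin_L: "finite L" using L(1) assms(2) finite_subset by blast
  have "X - L \<noteq> {}"
  proof
    assume "X - L = {}"
    then have "card X \<le> card L" using card_mono[OF fin_L] by blast
    then show False using Suc.prems L(2) by simp
  qed
  then obtain y where y: "y \<in> X - L" "\<forall>z\<in>X - L. rho y \<le> rho z"
    using ex_has_least_nat[of "\<lambda>z. z \<in> X - L" _ rho] by blast
  have "rho y < rho z" if z: "z \<in> X - insert y L" for z
  proof -
    have "rho y \<noteq> rho z" using inj_on_contraD[OF assms(1), of y z] y(1) z by blast
    moreover have "rho y \<le> rho z" using y(2) z by blast
    ultimately show ?thesis by simp
  qed
  then have "\<forall>x\<in>insert y L. \<forall>z\<in>X - insert y L. rho x < rho z" using L(3) by blast
  moreover have "card (insert y L) = Suc k" using y fin_L L(2) by simp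
  ultimately show ?case using L(1) y(1) by (intro exI[of _ "insert y L"]) auto
qed auto

section \<open>Vertex covers and induced matchings\<close>

definition adjacent :: "('a \<times> 'a) set \<Rightarrow> 'a \<Rightarrow> 'a \<Rightarrow> bool" where
  "adjacent G x y \<longleftrightarrow> (x, y) \<in> G \<or> (y, x) \<in> G"

definition induced_matching :: "('a \<times> 'a) set \<Rightarrow> ('a \<times> 'a) set \<Rightarrow> bool" where
  "induced_matching G M \<longleftrightarrow> (\<forall>e\<in>M. \<forall>e'\<in>M. \<not> adjacent G (fst e) (fst e') \<and>
     \<not> adjacent G (snd e) (snd e') \<and> (adjacent G (fst e) (snd e') \<longleftrightarrow> e = e'))"

lemma induced_matchingD:
  assumes "induced_matching G M" "e \<in> M" "e' \<in> M"
  shows "\<not> adjacent G (fst e) (fst e')" "\<not> adjacent G (snd e) (snd e')"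
    "adjacent G (fst e) (snd e') \<longleftrightarrow> e = e'"
  using assms unfolding induced_matching_def by blast+

lemma adjacent_commute: "adjacent G x y \<longleftrightarrow> adjacent G y x"
  by (auto simp: adjacent_def)

lemma induced_matching_swap:
  assumes "induced_matching G M" shows "induced_matching G (prod.swap ` M)"
  unfolding induced_matching_def
proof (intro ballI)
  fix e e' assume "e \<in> prod.swap ` M" "e' \<in> prod.swap ` M"
  then obtain d d' where "d \<in> M" "d' \<in> M" "e = prod.swap d" "e' = prod.swap d'" by blast
  then show "\<not> adjacent G (fst e) (fst e') \<and> \<not> adjacent G (snd e) (snd e') \<and>
      (adjacent G (fst e) (snd e') \<longleftrightarrow> e = e')"
    using induced_matchingD[OF assms] adjacent_commute by (metis fst_swap snd_swap)
qed

definition vertex_cover :: "('a \<times> 'a) set \<Rightarrow> ('a \<Rightarrow> bool) \<Rightarrow> bool" where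
  "vertex_cover G a \<longleftrightarrow> (\<forall>(x, y)\<in>G. a x \<or> a y)"

text \<open>Fooling set: for \<open>S \<subseteq> M\<close> switch off the left ends of \<open>S\<close>; the completion for \<open>e \<in> M\<close>
  switches off only the right end of \<open>e\<close>, which leaves a vertex cover iff \<open>e \<notin> S\<close>.\<close>

lemma obdd_vertex_cover_bound:
  assumes fin: "finite (bnodes E)" and ord: "var_order E rho"
    and comp: "computes E (vertex_cover G)"
    and before: "\<forall>x\<in>L. \<forall>y\<in>R. rho x < rho y"
    and M: "finite M" "M \<subseteq> L \<times> R" "induced_matching G M"
  shows "2 ^ card M \<le> card (bnodes E) + 2"
proof -
  define \<alpha> where "\<alpha> S x \<longleftrightarrow> x \<notin> fst ` S" for S :: "(nat \<times> nat) set" and x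
  have LR: "L \<inter> R = {}" using before by fastforce
  have cover_iff: "vertex_cover G (override_on (\<alpha> S) (\<lambda>x. x \<noteq> snd e) R) \<longleftrightarrow> e \<notin> S"
    if S: "S \<subseteq> M" and e: "e \<in> M" for S e
  proof -
    have false_iff: "\<not> override_on (\<alpha> S) (\<lambda>x. x \<noteq> snd e) R x \<longleftrightarrow> x = snd e \<or> x \<in> fst ` S" for x
      using S e M(2) LR by (force simp: override_on_def \<alpha>_def)
    have "\<not> vertex_cover G (override_on (\<alpha> S) (\<lambda>x. x \<noteq> snd e) R) \<longleftrightarrow>
        (\<exists>x y. adjacent G x y \<and> (x = snd e \<or> x \<in> fst ` S) \<and> (y = snd e \<or> y \<in> fst ` S))"
      unfolding vertex_cover_def adjacent_def false_iff[symmetric] by blast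
    also have "\<dots> \<longleftrightarrow> (\<exists>d\<in>S. adjacent G (fst d) (snd e))"
      using induced_matchingD[OF M(3)] S e adjacent_commute by (smt (verit) image_iff subsetD)
    also have "\<dots> \<longleftrightarrow> e \<in> S"
      using induced_matchingD(3)[OF M(3) _ e] S by blast
    finally show ?thesis by blast
  qed
  have "card (Pow M) \<le> card (bnodes E) + 2"
  proof (rule obdd_fooling_set[OF fin ord comp before])
    show "\<alpha> S x = \<alpha> T x" if "S \<in> Pow M" "T \<in> Pow M" "x \<notin> L" for S T x
      using that M(2) by (auto simp: \<alpha>_def)
    show "\<exists>\<beta>. vertex_cover G (override_on (\<alpha> S) \<beta> R) \<noteq> vertex_cover G (override_on (\<alpha> T) \<beta> R)"
      if ST: "S \<in> Pow M" "T \<in> Pow M" "S \<noteq> T" for S T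
    proof -
      obtain e where "e \<in> M" "e \<in> S \<longleftrightarrow> e \<notin> T" using ST by blast
      then show ?thesis using cover_iff ST by blast
    qed
  qed
  then show ?thesis using M(1) by (simp add: card_Pow)
qed

section \<open>Bipartite expanders\<close>

lemma exists_low_indegree:
  fixes rel :: "'a \<Rightarrow> 'a \<Rightarrow> bool"
  assumes fin: "finite V" and ne: "V \<noteq> {}" and out: "\<forall>v\<in>V. card {w\<in>V. rel v w} \<le> d"
  shows "\<exists>v\<in>V. card {u\<in>V. rel u v} \<le> d"
proof (rule ccontr)
  assume "\<not> ?thesis"
  then have gt: "\<forall>v\<in>V. d + 1 \<le> card {u\<in>V. rel u v}" by auto
  have card_eq: "card {u\<in>V. P u} = (\<Sum>u\<in>V. if P u then 1 else 0)" for P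
    using fin by (simp add: sum.inter_filter[symmetric])
  have "(d + 1) * card V \<le> (\<Sum>v\<in>V. card {u\<in>V. rel u v})"
    using sum_mono[of V "\<lambda>_. d + 1"] gt by (simp add: mult.commute)
  also have "\<dots> = (\<Sum>u\<in>V. card {w\<in>V. rel u w})"
    unfolding card_eq by (rule sum.swap)
  also have "\<dots> \<le> d * card V"
    using sum_mono[of V _ "\<lambda>_. d"] out by (simp add: mult.commute)
  finally have "(d + 1) * card V \<le> d * card V" .
  moreover have "card V > 0" using fin ne by (simp add: card_gt_0_iff)
  ultimately show False by simp
qed

text \<open>Greedy: take a vertex of in-degree at most \<open>d\<close> and discard its at most \<open>2 d\<close> neighbours.\<close>

lemma exists_large_independent_set:
  fixes rel :: "'a \<Rightarrow> 'a \<Rightarrow> bool"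
  assumes "finite V" and "\<forall>v\<in>V. card {w\<in>V. rel v w} \<le> d"
  shows "\<exists>I\<subseteq>V. card V \<le> (2 * d + 1) * card I \<and> (\<forall>v\<in>I. \<forall>w\<in>I. v \<noteq> w \<longrightarrow> \<not> rel v w)"
  using assms
proof (induction "card V" arbitrary: V rule: less_induct)
  case less
  show ?case
  proof (cases "V = {}")
    case False
    obtain v where v: "v \<in> V" and in_deg: "card {u\<in>V. rel u v} \<le> d"
      using exists_low_indegree[OF less.prems(1) False less.prems(2)] by blast
    define N where "N = insert v ({w\<in>V. rel v w} \<union> {u\<in>V. rel u v})"
    have NV: "N \<subseteq> V" using v by (auto simp: N_def)
    have card_N: "card N \<le> 2 * d + 1"
    proof -
      have "card N \<le> Suc (card ({w\<in>V. rel v w} \<union> {u\<in>V. rel u v}))"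
        unfolding N_def using less.prems(1) by (simp add: card_insert_if)
      also have "\<dots> \<le> Suc (card {w\<in>V. rel v w} + card {u\<in>V. rel u v})"
        using card_Un_le by simp
      finally show ?thesis using in_deg less.prems(2) v by fastforce
    qed
    have fin': "finite (V - N)" using less.prems(1) by simp
    have smaller: "card (V - N) < card V"
      using v less.prems(1) by (intro psubset_card_mono) (auto simp: N_def)
    have out_deg: "\<forall>x\<in>V - N. card {w\<in>V - N. rel x w} \<le> d"
    proof
      fix x assume x: "x \<in> V - N"
      have "card {w\<in>V - N. rel x w} \<le> card {w\<in>V. rel x w}"
        by (rule card_mono) (use less.prems(1) in auto)
      then show "card {w\<in>V - N. rel x w} \<le> d" using less.prems(2) x by fastforce
    qed
    obtain I where I: "I \<subseteq> V - N" "card (V - N) \<le> (2 * d + 1) * card I"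
        "\<forall>x\<in>I. \<forall>w\<in>I. x \<noteq> w \<longrightarrow> \<not> rel x w"
      using less.hyps[OF smaller fin' out_deg] by blast
    have "v \<notin> I" "finite I" using I(1) fin' finite_subset by (auto simp: N_def)
    have "card V \<le> card (V - N) + card N"
      using card_Diff_subset[OF finite_subset[OF NV less.prems(1)] NV]
        card_mono[OF less.prems(1) NV]
      by linarith
    then have "card V \<le> (2 * d + 1) * card (insert v I)"
      using I(2) card_N \<open>v \<notin> I\<close> \<open>finite I\<close> by simp
    moreover have "insert v I \<subseteq> V" "\<forall>x\<in>insert v I. \<forall>w\<in>insert v I. x \<noteq> w \<longrightarrow> \<not> rel x w"
      using I(1,3) v by (auto simp: N_def)
    ultimately show ?thesis by blast
  qed simp
qed

text \<open>\<open>\<phi> j k\<close> (for \<open>j < 8\<close>) lists the neighbours of the left vertex \<open>k\<close> in a bipartite graph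
  with both sides \<open>{..<8 * m}\<close>; the second clause says that any \<open>4 m\<close> left vertices have
  more than \<open>5 m\<close> neighbours.\<close>

definition expander :: "nat \<Rightarrow> (nat \<Rightarrow> nat \<Rightarrow> nat) \<Rightarrow> bool" where
  "expander m \<phi> \<longleftrightarrow> (\<forall>j<8. \<forall>k<8*m. \<phi> j k < 8*m) \<and>
     (\<forall>A C. A \<subseteq> {..<8*m} \<longrightarrow> card A = 4*m \<longrightarrow> C \<subseteq> {..<8*m} \<longrightarrow> card C = 3*m \<longrightarrow>
        (\<exists>j<8. \<exists>k\<in>A. \<phi> j k \<in> C))"

lemma expander_range: "expander m \<phi> \<Longrightarrow> \<forall>j<8. \<forall>k<8*m. \<phi> j k < 8*m"
  by (simp add: expander_def)

lemma card_maps_avoiding: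
  fixes m :: nat
  assumes A: "A \<subseteq> {..<8*m}" "card A = 4*m" and C: "C \<subseteq> {..<8*m}" "card C = 3*m"
  shows "card (\<Pi>\<^sub>E i\<in>{..<8::nat} \<times> {..<8*m}. if snd i \<in> A then {..<8*m} - C else {..<8*m})
    = (5*m)^(32*m) * (8*m)^(32*m)"
proof -
  have "finite A" "finite C" using A(1) C(1) finite_subset by auto
  then have card_A': "card ({..<8*m} - A) = 4*m" and card_C': "card ({..<8*m} - C) = 5*m"
    using A C by (simp_all add: card_Diff_subset)
  have split: "({..<8::nat} \<times> {..<8*m}) \<inter> {i. snd i \<in> A} = {..<8} \<times> A"
    "({..<8::nat} \<times> {..<8*m}) \<inter> - {i. snd i \<in> A} = {..<8} \<times> ({..<8*m} - A)"
    using A(1) by auto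
  have "card (\<Pi>\<^sub>E i\<in>{..<8::nat} \<times> {..<8*m}. if snd i \<in> A then {..<8*m} - C else {..<8*m})
      = (\<Prod>i\<in>{..<8::nat} \<times> {..<8*m}. if snd i \<in> A then 5*m else 8*m)"
    by (simp add: card_PiE if_distrib card_C' cong: if_cong)
  also have "\<dots> = (5*m)^(32*m) * (8*m)^(32*m)"
    by (simp add: prod.If_cases split card_cartesian_product A(2) card_A')
  finally show ?thesis .
qed

lemma expander_counting_inequality:
  fixes m :: nat
  assumes "m > 0"
  shows "2^(16*m) * ((5*m)^(32*m) * (8*m)^(32*m)) < (8*m)^(64*m)"
proof -
  have "(2::nat)^16 * 5^32 < 8^32" by simp
  then have "2^16 * (5*m)^32 < (8*m)^32"
    using assms by (simp add: power_mult_distrib)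
  then have "(2^16 * (5*m)^32 * (8*m)^32)^m < ((8*m)^32 * (8*m)^32)^m"
    using assms by (intro power_strict_mono) auto
  moreover have "2^(16*m) * ((5*m)^(32*m) * (8*m)^(32*m)) = (2^16 * (5*m)^32 * (8*m)^32)^m"
    by (simp only: power_mult power_mult_distrib mult.assoc)
  moreover have "(8*m)^(64*m) = ((8*m)^32 * (8*m)^32)^m"
    by (simp only: power_mult power_add[symmetric]) simp
  ultimately show ?thesis by simp
qed

lemma exists_expander:
  assumes "m > 0" shows "\<exists>\<phi>. expander m \<phi>"
proof (rule ccontr)
  assume none: "\<nexists>\<phi>. expander m \<phi>"
  define Dom where "Dom = {..<8::nat} \<times> {..<8*m}"
  define \<Omega> where "\<Omega> = (\<Pi>\<^sub>E i\<in>Dom. {..<8*m})"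
  define P where "P = {(A, C). A \<subseteq> {..<8*m} \<and> card A = 4*m \<and> C \<subseteq> {..<8*m} \<and> card C = 3*m}"
  define Bad where "Bad p = (\<Pi>\<^sub>E i\<in>Dom. if snd i \<in> fst p then {..<8*m} - snd p else {..<8*m})" for p
  have P_sub: "P \<subseteq> Pow {..<8*m} \<times> Pow {..<8*m}" by (auto simp: P_def)
  then have fin_P: "finite P" by (rule finite_subset) simp
  have "card P \<le> card (Pow {..<8*m} \<times> Pow {..<8*m})" by (rule card_mono[OF _ P_sub]) simp
  then have card_P: "card P \<le> 2^(16*m)"
    by (simp add: card_cartesian_product card_Pow power_add[symmetric])
  have card_Bad: "card (Bad p) = (5*m)^(32*m) * (8*m)^(32*m)" if p: "p \<in> P" for p
  proof -
    obtain A C where "p = (A, C)" "A \<subseteq> {..<8*m}" "card A = 4*m" "C \<subseteq> {..<8*m}" "card C = 3*m"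
      using p by (cases p) (auto simp: P_def)
    then show ?thesis unfolding Bad_def Dom_def using card_maps_avoiding by simp
  qed
  have "\<Omega> \<subseteq> (\<Union>p\<in>P. Bad p)"
  proof
    fix F assume F: "F \<in> \<Omega>"
    then have "\<forall>j<8. \<forall>k<8*m. F (j, k) < 8*m" by (auto simp: \<Omega>_def Dom_def)
    moreover have "\<not> expander m (\<lambda>j k. F (j, k))" using none by blast
    ultimately obtain A C where "(A, C) \<in> P" and "\<not> (\<exists>j<8. \<exists>k\<in>A. F (j, k) \<in> C)"
      unfolding expander_def P_def by blast
    then have "F \<in> Bad (A, C)" using F by (auto simp: Bad_def \<Omega>_def Dom_def)
    then show "F \<in> (\<Union>p\<in>P. Bad p)" using \<open>(A, C) \<in> P\<close> by blast
  qed
  then have "card \<Omega> \<le> card (\<Union>p\<in>P. Bad p)"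
    by (intro card_mono) (auto simp: Bad_def Dom_def fin_P intro!: finite_PiE)
  also have "\<dots> \<le> (\<Sum>p\<in>P. card (Bad p))" by (rule card_UN_le[OF fin_P])
  also have "\<dots> = card P * ((5*m)^(32*m) * (8*m)^(32*m))" by (simp add: card_Bad)
  also have "\<dots> \<le> 2^(16*m) * ((5*m)^(32*m) * (8*m)^(32*m))"
    using card_P by simp
  also have "\<dots> < (8*m)^(64*m)" by (rule expander_counting_inequality[OF assms])
  also have "\<dots> = card \<Omega>" by (simp add: \<Omega>_def Dom_def card_PiE card_cartesian_product)
  finally show False by simp
qed

lemma expander_neighbours:
  assumes \<phi>: "expander m \<phi>" and S: "S \<subseteq> {..<8*m}" and T: "T \<subseteq> {..<8*m}"
    and card_S: "4*m \<le> card S" "card S \<le> card T"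
  shows "m \<le> card {v\<in>T. \<exists>j<8. \<exists>k\<in>S. \<phi> j k = v}"
proof (rule ccontr)
  define N where "N = {v\<in>T. \<exists>j<8. \<exists>k\<in>S. \<phi> j k = v}"
  assume "\<not> m \<le> card {v\<in>T. \<exists>j<8. \<exists>k\<in>S. \<phi> j k = v}"
  then have "card N < m" unfolding N_def by simp
  moreover have "N \<subseteq> T" "finite T" using T finite_subset by (auto simp: N_def)
  ultimately have "3*m \<le> card (T - N)"
    using card_S card_Diff_subset[of N T] finite_subset by fastforce
  then obtain C where C: "C \<subseteq> T - N" "card C = 3*m" by (meson obtain_subset_with_card_n)
  obtain A where A: "A \<subseteq> S" "card A = 4*m" using card_S(1) by (meson obtain_subset_with_card_n)
  have "\<exists>j<8. \<exists>k\<in>A. \<phi> j k \<in> C"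
    using \<phi> A C S T unfolding expander_def by (meson Diff_subset order_trans)
  then show False using A C unfolding N_def by blast
qed

definition bipartite_induced_matching :: "(nat \<Rightarrow> nat \<Rightarrow> nat) \<Rightarrow> (nat \<times> nat) set \<Rightarrow> bool" where
  "bipartite_induced_matching \<phi> M \<longleftrightarrow> (\<forall>e\<in>M. \<forall>e'\<in>M. (\<exists>j<8. \<phi> j (fst e) = snd e') \<longleftrightarrow> e = e')"

text \<open>The induced matching is read off from a large independent set in the digraph joining
  each right vertex \<open>v\<close> to the neighbours of a chosen left neighbour of \<open>v\<close>.\<close>

lemma expander_induced_matching:
  assumes \<phi>: "expander m \<phi>" and S: "S \<subseteq> {..<8*m}" and T: "T \<subseteq> {..<8*m}"
    and card_S: "4*m \<le> card S" "card S \<le> card T"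
  shows "\<exists>M \<subseteq> S \<times> T. m \<le> 17 * card M \<and> bipartite_induced_matching \<phi> M"
proof -
  define N where "N = {v\<in>T. \<exists>j<8. \<exists>k\<in>S. \<phi> j k = v}"
  have "\<forall>v\<in>N. \<exists>k. k \<in> S \<and> (\<exists>j<8. \<phi> j k = v)" by (auto simp: N_def)
  then obtain kk where kk: "\<forall>v\<in>N. kk v \<in> S \<and> (\<exists>j<8. \<phi> j (kk v) = v)" by (metis bchoice)
  have fin_N: "finite N" using T by (auto simp: N_def intro: finite_subset)
  have "card {w\<in>N. \<exists>j<8. \<phi> j (kk v) = w} \<le> 8" for v
  proof -
    have "card {w\<in>N. \<exists>j<8. \<phi> j (kk v) = w} \<le> card ((\<lambda>j. \<phi> j (kk v)) ` {..<8})"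
      by (rule card_mono) auto
    also have "\<dots> \<le> 8" using card_image_le[of "{..<8::nat}" "\<lambda>j. \<phi> j (kk v)"] by simp
    finally show ?thesis .
  qed
  then obtain I where I: "I \<subseteq> N" "card N \<le> 17 * card I"
    and indep: "\<forall>v\<in>I. \<forall>w\<in>I. v \<noteq> w \<longrightarrow> \<not> (\<exists>j<8. \<phi> j (kk v) = w)"
    using exists_large_independent_set[OF fin_N, of "\<lambda>v w. \<exists>j<8. \<phi> j (kk v) = w" 8] by auto
  define M where "M = (\<lambda>v. (kk v, v)) ` I"
  have "card M = card I" unfolding M_def by (rule card_image) (auto intro: inj_onI)
  moreover have "m \<le> card N" unfolding N_def by (rule expander_neighbours[OF assms])
  moreover have "M \<subseteq> S \<times> T" using I(1) kk by (auto simp: M_def N_def)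
  moreover have "(\<exists>j<8. \<phi> j (fst e) = snd e') \<longleftrightarrow> e = e'" if ee': "e \<in> M" "e' \<in> M" for e e'
  proof -
    obtain v w where "v \<in> I" "w \<in> I" "e = (kk v, v)" "e' = (kk w, w)"
      using ee' by (auto simp: M_def)
    moreover have "(\<exists>j<8. \<phi> j (kk v) = w) \<longleftrightarrow> v = w"
      using \<open>v \<in> I\<close> \<open>w \<in> I\<close> indep kk I(1) by blast
    ultimately show ?thesis by auto
  qed
  ultimately show ?thesis
    using I(2) unfolding bipartite_induced_matching_def by (intro exI[of _ M]) auto
qed

section \<open>The diagram\<close>

text \<open>Variables: \<open>x\<^sub>k = k\<close> and \<open>z\<^bsub>k,j\<^esub> = 16 m + 8 k + j\<close> are quantified, \<open>y\<^sub>k = 8 m + k\<close> and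
  \<open>w\<^sub>v = 80 m + v\<close> stand for the left and right vertices. The diagram moves to the first \<open>k\<close>
  with \<open>x\<^sub>k\<close> true, rejects if \<open>y\<^sub>k\<close> is true, moves to the first \<open>j\<close> with \<open>z\<^bsub>k,j\<^esub>\<close> true and
  accepts iff \<open>w\<^bsub>\<phi> j k\<^esub>\<close> is false.\<close>

datatype node = Choose nat | Left nat | Edge nat nat | Right nat

fun node_var :: "nat \<Rightarrow> node \<Rightarrow> nat" where
  "node_var m (Choose k) = k"
| "node_var m (Left k) = 8*m + k"
| "node_var m (Edge k j) = 16*m + 8*k + j"
| "node_var m (Right v) = 80*m + v"

fun valid_node :: "nat \<Rightarrow> node \<Rightarrow> bool" where
  "valid_node m (Choose k) \<longleftrightarrow> k < 8*m"
| "valid_node m (Left k) \<longleftrightarrow> k < 8*m"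
| "valid_node m (Edge k j) \<longleftrightarrow> k < 8*m \<and> j < 8"
| "valid_node m (Right v) \<longleftrightarrow> v < 8*m"

definition node_at :: "nat \<Rightarrow> nat \<Rightarrow> node" where
  "node_at m v =
    (if v < 8*m then Choose v
     else if v < 16*m then Left (v - 8*m)
     else if v < 80*m then Edge ((v - 16*m) div 8) ((v - 16*m) mod 8)
     else Right (v - 80*m))"

fun node_succ :: "nat \<Rightarrow> (nat \<Rightarrow> nat \<Rightarrow> nat) \<Rightarrow> node \<Rightarrow> bool \<Rightarrow> node + bool" where
  "node_succ m \<phi> (Choose k) c =
    (if c then Inl (Left k) else if Suc k < 8*m then Inl (Choose (Suc k)) else Inr False)"
| "node_succ m \<phi> (Left k) c = (if c then Inr False else Inl (Edge k 0))"
| "node_succ m \<phi> (Edge k j) c =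
    (if c then Inl (Right (\<phi> j k)) else if Suc j < 8 then Inl (Edge k (Suc j)) else Inr False)"
| "node_succ m \<phi> (Right v) c = (if c then Inr False else Inr True)"

definition cover_bdd :: "nat \<Rightarrow> (nat \<Rightarrow> nat \<Rightarrow> nat) \<Rightarrow> bdd" where
  "cover_bdd m \<phi> = \<lparr>bnodes = {..<88*m}, bsrc = Inl 0, bvar = id,
     bsucc = \<lambda>v c. map_sum (node_var m) id (node_succ m \<phi> (node_at m v) c)\<rparr>"

definition quantified_vars :: "nat \<Rightarrow> nat set" where
  "quantified_vars m = {..<8*m} \<union> {16*m..<80*m}"

definition cover_edges :: "nat \<Rightarrow> (nat \<Rightarrow> nat \<Rightarrow> nat) \<Rightarrow> (nat \<times> nat) set" where
  "cover_edges m \<phi> = {(8*m + k, 80*m + \<phi> j k) | k j. k < 8*m \<and> j < 8}"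

lemma node_at_node_var: "valid_node m x \<Longrightarrow> node_at m (node_var m x) = x"
  by (cases x) (auto simp: node_at_def)

lemma node_var_node_at:
  assumes "v < 88*m" shows "valid_node m (node_at m v)" "node_var m (node_at m v) = v"
proof -
  have "(v - 16*m) div 8 < 8*m" if "v < 80*m" using that by auto
  then show "valid_node m (node_at m v)" using assms by (auto simp: node_at_def)
  show "node_var m (node_at m v) = v" using assms by (auto simp: node_at_def)
qed

lemma valid_node_var_less: "valid_node m x \<Longrightarrow> node_var m x < 88*m"
  by (cases x) auto

lemma node_succ_increasing:
  assumes ran: "\<forall>j<8. \<forall>k<8*m. \<phi> j k < 8*m"
    and "valid_node m x" "node_succ m \<phi> x c = Inl y"
  shows "valid_node m y \<and> node_var m x < node_var m y"
  using assms by (cases x) (auto split: if_splits)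

lemma cover_bdd_obdd:
  assumes "m > 0" and ran: "\<forall>j<8. \<forall>k<8*m. \<phi> j k < 8*m"
  shows "is_obdd (cover_bdd m \<phi>)"
proof -
  have succ: "valid_target (cover_bdd m \<phi>) (bsucc (cover_bdd m \<phi>) v c) \<and>
      (\<forall>w. bsucc (cover_bdd m \<phi>) v c = Inl w \<longrightarrow> v < w)" if "v < 88*m" for v c
    using node_succ_increasing[OF ran node_var_node_at(1)[OF that], where c = c] valid_node_var_less
      node_var_node_at[OF that]
    by (cases "node_succ m \<phi> (node_at m v) c") (auto simp: cover_bdd_def valid_target_def)
  have "inj (id :: nat \<Rightarrow> nat)" by simp
  then show ?thesis
    unfolding is_obdd_def using succ assms(1)
    by (auto simp: cover_bdd_def valid_target_def intro!: exI[of _ id])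
qed

lemma weak_width_cover_bdd: "weak_width (cover_bdd m \<phi>) \<le> 1"
  by (rule weak_width_le_1) (simp add: cover_bdd_def)

lemma bdd_vars_cover_bdd: "bdd_vars (cover_bdd m \<phi>) = {..<88*m}"
  by (simp add: bdd_vars_def cover_bdd_def)

text \<open>What a path from a node to the sink \<open>1\<close> certifies: an edge of \<open>cover_edges m \<phi>\<close> not covered
  by \<open>a\<close>, among those the node can still select.\<close>

fun uncovered_from :: "nat \<Rightarrow> (nat \<Rightarrow> nat \<Rightarrow> nat) \<Rightarrow> (nat \<Rightarrow> bool) \<Rightarrow> node \<Rightarrow> bool" where
  "uncovered_from m \<phi> a (Choose k) \<longleftrightarrow>
     (\<exists>k'. k \<le> k' \<and> k' < 8*m \<and> (\<exists>j<8. \<not> a (8*m + k') \<and> \<not> a (80*m + \<phi> j k')))"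
| "uncovered_from m \<phi> a (Left k) \<longleftrightarrow> (\<exists>j<8. \<not> a (8*m + k) \<and> \<not> a (80*m + \<phi> j k))"
| "uncovered_from m \<phi> a (Edge k j) \<longleftrightarrow> (\<exists>j'. j \<le> j' \<and> j' < 8 \<and> \<not> a (80*m + \<phi> j' k))"
| "uncovered_from m \<phi> a (Right v) \<longleftrightarrow> \<not> a (80*m + v)"

lemma uncovered_from_step:
  assumes "valid_node m x"
    and "case node_succ m \<phi> x (a (node_var m x)) of Inl y \<Rightarrow> uncovered_from m \<phi> a y | Inr b \<Rightarrow> b"
  shows "uncovered_from m \<phi> a x"
  using assms
proof (cases x)
  case (Choose k)
  then show ?thesis using assms by (cases "a k") (auto split: if_splits intro: Suc_leD)
next
  case (Edge k j)
  then show ?thesis using assms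
    by (cases "a (node_var m x)") (auto split: if_splits intro: Suc_leD)
qed (auto split: if_splits)

lemma cover_bdd_reaches_True_uncovered:
  assumes ran: "\<forall>j<8. \<forall>k<8*m. \<phi> j k < 8*m"
    and "reaches D a u b" "D = cover_bdd m \<phi>" "b"
  shows "case u of Inl v \<Rightarrow> uncovered_from m \<phi> a (node_at m v) | Inr b \<Rightarrow> b"
  using assms(2-)
proof (induction rule: reaches.induct)
  case (step v D a b)
  let ?x = "node_at m v"
  have v: "valid_node m ?x" "node_var m ?x = v"
    using step.hyps(1) step.prems node_var_node_at by (auto simp: cover_bdd_def)
  have "case node_succ m \<phi> ?x (a (node_var m ?x)) of Inl y \<Rightarrow> uncovered_from m \<phi> a y | Inr b \<Rightarrow> b"
    using step.IH[OF step.prems] v node_succ_increasing[OF ran v(1)]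
    by (cases "node_succ m \<phi> ?x (a v)") (auto simp: step.prems(1) cover_bdd_def node_at_node_var)
  then show ?case using uncovered_from_step[OF v(1)] by simp
qed simp

lemma cover_bdd_reaches_node:
  assumes "valid_node m x"
    and "reaches (cover_bdd m \<phi>) a (map_sum (node_var m) id (node_succ m \<phi> x (a (node_var m x)))) b"
  shows "reaches (cover_bdd m \<phi>) a (Inl (node_var m x)) b"
  using assms valid_node_var_less[OF assms(1)]
  by (intro reaches.step) (simp_all add: cover_bdd_def node_at_node_var)

lemma cover_bdd_reaches_True_if_uncovered:
  assumes ran: "\<forall>j<8. \<forall>k<8*m. \<phi> j k < 8*m"
    and kj: "k < 8*m" "j < 8" and uncovered: "\<not> a (8*m + k)" "\<not> a (80*m + \<phi> j k)"
    and a: "\<And>i. i < 8*m \<Longrightarrow> a i \<longleftrightarrow> i = k"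
      "\<And>i. i < 8 \<Longrightarrow> a (16*m + 8*k + i) \<longleftrightarrow> i = j"
  shows "reaches (cover_bdd m \<phi>) a (Inl 0) True"
proof -
  let ?D = "cover_bdd m \<phi>"
  have right: "reaches ?D a (Inl (node_var m (Right (\<phi> j k)))) True"
    using ran kj uncovered by (intro cover_bdd_reaches_node) (auto intro: reaches.sink)
  have edge: "reaches ?D a (Inl (node_var m (Edge k i))) True" if "i \<le> j" for i
    using that
  proof (induction i rule: inc_induct)
    case base
    then show ?case using kj a(2) right by (intro cover_bdd_reaches_node) auto
  next
    case (step i)
    then show ?case using kj a(2) by (intro cover_bdd_reaches_node) auto
  qed
  have left: "reaches ?D a (Inl (node_var m (Left k))) True"
    using kj uncovered edge[of 0] by (intro cover_bdd_reaches_node) auto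
  have "reaches ?D a (Inl (node_var m (Choose i))) True" if "i \<le> k" for i
    using that
  proof (induction i rule: inc_induct)
    case base
    then show ?case using kj a(1) left by (intro cover_bdd_reaches_node) auto
  next
    case (step i)
    then show ?case using kj a(1) by (intro cover_bdd_reaches_node) auto
  qed
  from this[of 0] show ?thesis by simp
qed

lemma exists_quant_cover_bdd:
  assumes "m > 0" and ran: "\<forall>j<8. \<forall>k<8*m. \<phi> j k < 8*m"
  shows "exists_quant (quantified_vars m) (cover_bdd m \<phi>) a \<longleftrightarrow> \<not> vertex_cover (cover_edges m \<phi>) a"
proof
  assume "exists_quant (quantified_vars m) (cover_bdd m \<phi>) a"
  then obtain a' where agree: "\<And>x. x \<notin> quantified_vars m \<Longrightarrow> a' x = a x"
    and reach: "reaches (cover_bdd m \<phi>) a' (Inl 0) True"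
    unfolding exists_quant_def by (auto simp: cover_bdd_def)
  have "uncovered_from m \<phi> a' (Choose 0)"
    using cover_bdd_reaches_True_uncovered[OF ran reach refl TrueI] \<open>m > 0\<close>
    by (simp add: node_at_def)
  then obtain k j where "k < 8*m" "j < 8" "\<not> a' (8*m + k)" "\<not> a' (80*m + \<phi> j k)" by auto
  moreover have "8*m + k \<notin> quantified_vars m" "80*m + \<phi> j k \<notin> quantified_vars m"
    using \<open>k < 8*m\<close> by (auto simp: quantified_vars_def)
  ultimately show "\<not> vertex_cover (cover_edges m \<phi>) a"
    using agree unfolding vertex_cover_def cover_edges_def by auto
next
  assume "\<not> vertex_cover (cover_edges m \<phi>) a"
  then obtain k j where kj: "k < 8*m" "j < 8" and uncovered: "\<not> a (8*m + k)" "\<not> a (80*m + \<phi> j k)"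
    unfolding vertex_cover_def cover_edges_def by auto
  define a' where "a' = override_on a (\<lambda>i. i = k \<or> i = 16*m + 8*k + j) (quantified_vars m)"
  have "reaches (cover_bdd m \<phi>) a' (Inl 0) True"
  proof (rule cover_bdd_reaches_True_if_uncovered[OF ran kj])
    show "\<not> a' (8*m + k)" "\<not> a' (80*m + \<phi> j k)"
      using uncovered kj by (auto simp: a'_def override_on_def quantified_vars_def)
    show "a' i \<longleftrightarrow> i = k" if "i < 8*m" for i
      using that kj by (auto simp: a'_def override_on_def quantified_vars_def)
    show "a' (16*m + 8*k + i) \<longleftrightarrow> i = j" if "i < 8" for i
      using that kj \<open>m > 0\<close> by (auto simp: a'_def override_on_def quantified_vars_def)
  qed
  moreover have "\<forall>x. x \<notin> quantified_vars m \<longrightarrow> a' x = a x" by (simp add: a'_def)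
  ultimately show "exists_quant (quantified_vars m) (cover_bdd m \<phi>) a"
    unfolding exists_quant_def by (auto simp: cover_bdd_def)
qed

section \<open>The lower bound\<close>

definition vertex_var_pairs :: "nat \<Rightarrow> (nat \<times> nat) set \<Rightarrow> (nat \<times> nat) set" where
  "vertex_var_pairs m M = (\<lambda>e. (8*m + fst e, 80*m + snd e)) ` M"

lemma adjacent_cover_edges:
  assumes "k < 8*m" "k' < 8*m" "v < 8*m" "v' < 8*m"
  shows "\<not> adjacent (cover_edges m \<phi>) (8*m + k) (8*m + k')"
    "\<not> adjacent (cover_edges m \<phi>) (80*m + v) (80*m + v')"
    "adjacent (cover_edges m \<phi>) (8*m + k) (80*m + v) \<longleftrightarrow> (\<exists>j<8. \<phi> j k = v)"
  using assms by (auto simp: adjacent_def cover_edges_def)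

lemma induced_matching_cover_edges:
  assumes M: "M \<subseteq> {..<8*m} \<times> {..<8*m}" "bipartite_induced_matching \<phi> M"
  shows "induced_matching (cover_edges m \<phi>) (vertex_var_pairs m M)"
  unfolding induced_matching_def
proof (intro ballI)
  fix e e' assume "e \<in> vertex_var_pairs m M" "e' \<in> vertex_var_pairs m M"
  then obtain d d' where d: "d \<in> M" "d' \<in> M"
    "e = (8*m + fst d, 80*m + snd d)" "e' = (8*m + fst d', 80*m + snd d')"
    unfolding vertex_var_pairs_def by blast
  then have "fst d < 8*m" "snd d < 8*m" "fst d' < 8*m" "snd d' < 8*m" using M(1) by auto
  then show "\<not> adjacent (cover_edges m \<phi>) (fst e) (fst e') \<and>
      \<not> adjacent (cover_edges m \<phi>) (snd e) (snd e') \<and>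
      (adjacent (cover_edges m \<phi>) (fst e) (snd e') \<longleftrightarrow> e = e')"
    using adjacent_cover_edges M(2) d by (auto simp: bipartite_induced_matching_def prod_eq_iff)
qed

lemma obdd_cover_edges_matching_bound:
  assumes fin: "finite (bnodes E)" and ord: "var_order E rho"
    and comp: "computes E (vertex_cover (cover_edges m \<phi>))"
    and before: "\<forall>x\<in>L. \<forall>y\<in>R. rho x < rho y"
    and M: "M \<subseteq> {..<8*m} \<times> {..<8*m}" "bipartite_induced_matching \<phi> M"
    and cut: "vertex_var_pairs m M \<subseteq> L \<times> R \<or> prod.swap ` vertex_var_pairs m M \<subseteq> L \<times> R"
  shows "card M \<le> log 2 (bdd_size E)"
proof -
  let ?N = "vertex_var_pairs m M"
  have "finite M" using M(1) by (rule finite_subset) simp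
  then have N: "finite ?N" "card ?N = card M" "induced_matching (cover_edges m \<phi>) ?N"
    using induced_matching_cover_edges[OF M]
    by (auto simp: vertex_var_pairs_def card_image inj_on_def prod_eq_iff)
  have "2 ^ card M \<le> card (bnodes E) + 2"
    using cut
  proof
    assume "?N \<subseteq> L \<times> R"
    then show ?thesis using obdd_vertex_cover_bound[OF fin ord comp before N(1) _ N(3)] N(2) by simp
  next
    assume "prod.swap ` ?N \<subseteq> L \<times> R"
    moreover have "card (prod.swap ` ?N) = card ?N" by (simp add: card_image)
    ultimately show ?thesis
      using obdd_vertex_cover_bound[OF fin ord comp before _ _ induced_matching_swap[OF N(3)]] N
      by simp
  qed
  then show ?thesis unfolding bdd_size_def by (rule le_log2_of_power)
qed

lemma card_cut_sides:
  fixes m :: nat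
  assumes "L \<subseteq> {8*m..<16*m} \<union> {80*m..<88*m}"
  shows "card {k. k < 8*m \<and> 8*m + k \<in> L} + card {v. v < 8*m \<and> 80*m + v \<in> L} = card L"
proof -
  define A where "A = {k. k < 8*m \<and> 8*m + k \<in> L}"
  define B where "B = {v. v < 8*m \<and> 80*m + v \<in> L}"
  have L: "L = (+) (8*m) ` A \<union> (+) (80*m) ` B"
  proof (intro equalityI subsetI)
    fix x assume "x \<in> L"
    then consider "8*m \<le> x" "x < 16*m" | "80*m \<le> x" "x < 88*m" using assms by fastforce
    then show "x \<in> (+) (8*m) ` A \<union> (+) (80*m) ` B"
    proof cases
      case 1
      then show ?thesis using \<open>x \<in> L\<close> by (auto simp: A_def image_iff intro!: exI[of _ "x - 8*m"])
    next
      case 2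
      then show ?thesis using \<open>x \<in> L\<close> by (auto simp: B_def image_iff intro!: exI[of _ "x - 80*m"])
    qed
  qed (auto simp: A_def B_def)
  have "finite A" "finite B" "(+) (8*m) ` A \<inter> (+) (80*m) ` B = {}" by (auto simp: A_def B_def)
  then have "card L = card ((+) (8*m) ` A) + card ((+) (80*m) ` B)"
    unfolding L by (simp add: card_Un_disjoint)
  then show ?thesis by (simp add: card_image A_def B_def)
qed

text \<open>Cut the \<open>16 m\<close> vertex variables after the first \<open>8 m\<close> in the variable order. One side of the
  expander has at least \<open>4 m\<close> vertices before the cut and the other at least as many after it,
  so the expander yields an induced matching of size \<open>m / 17\<close> across the cut.\<close>

lemma obdd_cover_edges_size:
  assumes \<phi>: "expander m \<phi>" and E: "is_obdd E" "computes E (vertex_cover (cover_edges m \<phi>))"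
  shows "real m \<le> 17 * log 2 (bdd_size E)"
proof -
  obtain rho where rho: "inj rho" "var_order E rho" "finite (bnodes E)"
    using E(1) by (rule is_obddE)
  define X where "X = {8*m..<16*m} \<union> {80*m..<88*m}"
  have "card X = 16*m" by (simp add: X_def card_Un_disjoint)
  then obtain L where L: "L \<subseteq> X" "card L = 8*m" and before: "\<forall>x\<in>L. \<forall>y\<in>X - L. rho x < rho y"
    using exists_initial_segment[of rho X "8*m"] inj_on_subset[OF rho(1)] by (auto simp: X_def)
  define A where "A = {k. k < 8*m \<and> 8*m + k \<in> L}"
  define B where "B = {v. v < 8*m \<and> 80*m + v \<in> L}"
  have card_AB: "card A + card B = 8*m" using card_cut_sides L unfolding A_def B_def X_def by simp
  have AB: "A \<subseteq> {..<8*m}" "B \<subseteq> {..<8*m}" "finite A" "finite B" by (auto simp: A_def B_def)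
  have "\<exists>M. M \<subseteq> {..<8*m} \<times> {..<8*m} \<and> bipartite_induced_matching \<phi> M \<and> m \<le> 17 * card M \<and>
      (vertex_var_pairs m M \<subseteq> L \<times> (X - L) \<or> prod.swap ` vertex_var_pairs m M \<subseteq> L \<times> (X - L))"
  proof (cases "4*m \<le> card A")
    case True
    have "card ({..<8*m} - B) = card A" using card_AB AB by (simp add: card_Diff_subset)
    then obtain M where M: "M \<subseteq> A \<times> ({..<8*m} - B)" "m \<le> 17 * card M"
        "bipartite_induced_matching \<phi> M"
      using expander_induced_matching[OF \<phi> AB(1), of "{..<8*m} - B"] True by auto
    moreover have "vertex_var_pairs m M \<subseteq> L \<times> (X - L)"
      using M(1) by (force simp: vertex_var_pairs_def A_def B_def X_def)
    ultimately show ?thesis using AB(1) by blast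
  next
    case False
    have "card ({..<8*m} - A) = card B" using card_AB AB by (simp add: card_Diff_subset)
    then have "4*m \<le> card ({..<8*m} - A)" "card ({..<8*m} - A) \<le> card B"
      using False card_AB by simp_all
    then obtain M where M: "M \<subseteq> ({..<8*m} - A) \<times> B" "m \<le> 17 * card M"
        "bipartite_induced_matching \<phi> M"
      using expander_induced_matching[OF \<phi> Diff_subset AB(2)] by blast
    moreover have "prod.swap ` vertex_var_pairs m M \<subseteq> L \<times> (X - L)"
      using M(1) by (force simp: vertex_var_pairs_def A_def B_def X_def)
    ultimately show ?thesis using AB(2) by blast
  qed
  then obtain M where M: "M \<subseteq> {..<8*m} \<times> {..<8*m}" "bipartite_induced_matching \<phi> M"
    "m \<le> 17 * card M"
    "vertex_var_pairs m M \<subseteq> L \<times> (X - L) \<or> prod.swap ` vertex_var_pairs m M \<subseteq> L \<times> (X - L)"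
    by blast
  have "card M \<le> log 2 (bdd_size E)"
    by (rule obdd_cover_edges_matching_bound[OF rho(3,2) E(2) before M(1,2,4)])
  moreover have "real m \<le> 17 * card M" using M(3) by linarith
  ultimately show ?thesis by linarith
qed

lemma obdd_exists_quant_cover_bdd_size:
  assumes "m > 0" and \<phi>: "expander m \<phi>" and E: "is_obdd E"
    "computes E (\<lambda>a. \<not> exists_quant (quantified_vars m) (cover_bdd m \<phi>) a)"
  shows "real m \<le> 17 * log 2 (bdd_size E)"
proof -
  have "(\<lambda>a. \<not> exists_quant (quantified_vars m) (cover_bdd m \<phi>) a) = vertex_cover (cover_edges m \<phi>)"
    using exists_quant_cover_bdd[OF \<open>m > 0\<close> expander_range[OF \<phi>]] by blast
  then show ?thesis using obdd_cover_edges_size[OF \<phi> E(1)] E(2) by simp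
qed

lemma linear_lower_bound_not_smallo:
  fixes f :: "nat \<Rightarrow> real"
  assumes "\<And>n. real n \<le> c * f n"
  shows "f \<notin> o(\<lambda>n. real n)"
proof
  assume small: "f \<in> o(\<lambda>n. real n)"
  have "norm (real n) \<le> \<bar>c\<bar> * norm (f n)" for n
    using assms[of n] abs_ge_self[of "c * f n"] by (simp add: abs_mult)
  then have "(\<lambda>n. real n) \<in> O(f)"
    by (intro bigoI[of _ "\<bar>c\<bar>"] always_eventually) simp
  from landau_o.big_small_asymmetric[OF this small] show False
    by (auto simp: eventually_at_top_linorder dest: spec[of _ 1])
qed

theorem lemma4:
  shows "\<exists>(D :: nat \<Rightarrow> bdd) (Z :: nat \<Rightarrow> nat set).
     (\<forall>n. is_obdd (D n) \<and> weak_width (D n) \<le> 3 \<and> Z n \<subseteq> bdd_vars (D n)) \<and>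
     (\<lambda>n. real (card (bdd_vars (D n)))) \<in> O(\<lambda>n. real n) \<and>
     \<not> (\<exists>E :: nat \<Rightarrow> bdd.
          (\<forall>n. is_obdd (E n) \<and> computes (E n) (\<lambda>a. \<not> exists_quant (Z n) (D n) a)) \<and>
          (\<lambda>n. log 2 (real (bdd_size (E n)))) \<in> o(\<lambda>n. real n))"
proof -
  define \<Phi> where "\<Phi> n = (SOME \<phi>. expander (Suc n) \<phi>)" for n
  have \<Phi>: "expander (Suc n) (\<Phi> n)" for n
    unfolding \<Phi>_def by (rule someI_ex[OF exists_expander]) simp
  define D where "D n = cover_bdd (Suc n) (\<Phi> n)" for n
  define Z where "Z n = quantified_vars (Suc n)" for n
  have "is_obdd (D n)" for n
    unfolding D_def by (rule cover_bdd_obdd[OF zero_less_Suc expander_range[OF \<Phi>]])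
  moreover have "weak_width (D n) \<le> 3" for n
    using weak_width_cover_bdd[of "Suc n" "\<Phi> n"] unfolding D_def by linarith
  moreover have "Z n \<subseteq> bdd_vars (D n)" for n
    by (auto simp: D_def Z_def bdd_vars_cover_bdd quantified_vars_def)
  moreover have "(\<lambda>n. real (card (bdd_vars (D n)))) \<in> O(\<lambda>n. real n)"
  proof (rule bigoI[of _ 176])
    show "\<forall>\<^sub>F n in sequentially. norm (real (card (bdd_vars (D n)))) \<le> 176 * norm (real n)"
      by (rule eventually_sequentiallyI[of 1]) (simp add: D_def bdd_vars_cover_bdd)
  qed
  moreover have "(\<lambda>n. log 2 (real (bdd_size (E n)))) \<notin> o(\<lambda>n. real n)"
    if E: "\<forall>n. is_obdd (E n) \<and> computes (E n) (\<lambda>a. \<not> exists_quant (Z n) (D n) a)" for E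
  proof (rule linear_lower_bound_not_smallo[where c = 17])
    fix n
    have "real (Suc n) \<le> 17 * log 2 (bdd_size (E n))"
      using E unfolding D_def Z_def
      by (intro obdd_exists_quant_cover_bdd_size[OF zero_less_Suc \<Phi>]) auto
    then show "real n \<le> 17 * log 2 (bdd_size (E n))" by simp
  qed
  ultimately show ?thesis by blast
qed

end
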